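(* Let $\omega\in\mathcal{F}^1(\mathbb{P}^n,e)$ be such that $J=\sqrt{J}$. Then $\mathcal{K}=\mathcal{K}_{set}$; more precisely $K$ equals the (radical) ideal of the Kupka set $\mathcal{K}_{set}$.
   Context: $S=\mathbb{C}[x_0,\ldots,x_n]$, $R=\sum x_i\partial/\partial x_i$. $\mathcal{F}^1(\mathbb{P}^n,e)$ ($e\ge2$) is the set of (classes up to scalar of) $\omega=\sum A_i dx_i$, $A_i\in S$ homogeneous of degree $e-1$, not all zero, with $i_R\omega=0$, $\omega\wedge d\omega=0$ and zero locus $\mathrm{sing}(\omega)\subseteq\mathbb{P}^n$ of codimension $\ge2$. $\mathscr{C}(\eta)$ is the ideal generated by the coefficients of a form $\eta$; $J=\mathscr{C}(\omega)$; $K=(J:\mathscr{C}(d\omega))$ and $\mathcal{K}=\mathrm{Proj}(S/K)$. $\mathcal{K}_{set}$ is the closure in $\mathbb{P}^n$ of the set of points $p\in\mathrm{sing}(\omega)$ with $d\omega(p)\ne0$. *)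

theory Defs
  imports Complex_Main "HOL-Library.Poly_Mapping"
begin

text \<open>Polynomials in the variables x_i, i ranging over a finite type 'n with CARD('n) = n+1,
  with complex coefficients: S = C[x_0,...,x_n].  Monomials are poly_mappings from variables to exponents.\<close>

type_synonym 'n mpoly = "('n \<Rightarrow>\<^sub>0 nat) \<Rightarrow>\<^sub>0 complex"

definition mvar :: "'n \<Rightarrow> 'n mpoly" where
  "mvar i = Poly_Mapping.single (Poly_Mapping.single i 1) 1"

definition mdeg :: "('n::finite \<Rightarrow>\<^sub>0 nat) \<Rightarrow> nat" where
  "mdeg m = (\<Sum>i\<in>UNIV. Poly_Mapping.lookup m i)"

definition homogeneous :: "nat \<Rightarrow> 'n::finite mpoly \<Rightarrow> bool" where
  "homogeneous d p \<longleftrightarrow> (\<forall>m\<in>Poly_Mapping.keys p. mdeg m = d)"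

definition meval :: "'n::finite mpoly \<Rightarrow> ('n \<Rightarrow> complex) \<Rightarrow> complex" where
  "meval p x = (\<Sum>m\<in>Poly_Mapping.keys p. Poly_Mapping.lookup p m * (\<Prod>i\<in>UNIV. x i ^ Poly_Mapping.lookup m i))"

definition mpderiv :: "'n \<Rightarrow> 'n mpoly \<Rightarrow> 'n mpoly" where
  "mpderiv i p = (\<Sum>m\<in>Poly_Mapping.keys p.
      Poly_Mapping.single (m - Poly_Mapping.single i 1) (Poly_Mapping.lookup p m * of_nat (Poly_Mapping.lookup m i)))"

definition is_ideal :: "'n mpoly set \<Rightarrow> bool" where
  "is_ideal I \<longleftrightarrow> 0 \<in> I \<and> (\<forall>f\<in>I. \<forall>g\<in>I. f + g \<in> I) \<and> (\<forall>f\<in>I. \<forall>h. h * f \<in> I)"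

definition gen_ideal :: "'n mpoly set \<Rightarrow> 'n mpoly set" where
  "gen_ideal G = \<Inter>{I. is_ideal I \<and> G \<subseteq> I}"

definition radical :: "'n mpoly set \<Rightarrow> 'n mpoly set" where
  "radical I = {f. \<exists>k. f ^ Suc k \<in> I}"

definition ideal_quot :: "'n mpoly set \<Rightarrow> 'n mpoly set \<Rightarrow> 'n mpoly set" where
  "ideal_quot I L = {f. \<forall>g\<in>L. f * g \<in> I}"

text \<open>A 1-form omega = sum A_i dx_i is given by its coefficient function A.
  Coefficients of d omega: B j k = d_j A_k - d_k A_j (coefficient of dx_j /\ dx_k).\<close>
definition dform :: "('n \<Rightarrow> 'n mpoly) \<Rightarrow> 'n \<Rightarrow> 'n \<Rightarrow> 'n mpoly" where
  "dform A j k = mpderiv j (A k) - mpderiv k (A j)"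

text \<open>Coefficients of omega /\ d omega on dx_i /\ dx_j /\ dx_k.\<close>
definition wedge_dform :: "('n \<Rightarrow> 'n mpoly) \<Rightarrow> 'n \<Rightarrow> 'n \<Rightarrow> 'n \<Rightarrow> 'n mpoly" where
  "wedge_dform A i j k = A i * dform A j k + A j * dform A k i + A k * dform A i j"

definition zero_set :: "'n::finite mpoly set \<Rightarrow> ('n \<Rightarrow> complex) set" where
  "zero_set F = {x. \<forall>f\<in>F. meval f x = 0}"

definition zariski_closed :: "('n::finite \<Rightarrow> complex) set \<Rightarrow> bool" where
  "zariski_closed Z \<longleftrightarrow> (\<exists>F. Z = zero_set F)"

definition zariski_closure :: "('n::finite \<Rightarrow> complex) set \<Rightarrow> ('n \<Rightarrow> complex) set" where
  "zariski_closure X = \<Inter>{Z. zariski_closed Z \<and> X \<subseteq> Z}"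

definition irreducible_closed :: "('n::finite \<Rightarrow> complex) set \<Rightarrow> bool" where
  "irreducible_closed Z \<longleftrightarrow> zariski_closed Z \<and> Z \<noteq> {} \<and>
     (\<forall>Z1 Z2. zariski_closed Z1 \<and> zariski_closed Z2 \<and> Z \<subseteq> Z1 \<union> Z2 \<longrightarrow> Z \<subseteq> Z1 \<or> Z \<subseteq> Z2)"

text \<open>Krull dimension of a closed set X is at most d: every strictly increasing chain
  Z_0 \<subset> ... \<subset> Z_k of irreducible closed subsets of X has k \<le> d.\<close>
definition dim_le :: "('n::finite \<Rightarrow> complex) set \<Rightarrow> nat \<Rightarrow> bool" where
  "dim_le X d \<longleftrightarrow> (\<forall>Zs. Zs \<noteq> [] \<and> (\<forall>Z\<in>set Zs. irreducible_closed Z \<and> Z \<subseteq> X) \<and>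
       (\<forall>t. Suc t < length Zs \<longrightarrow> Zs ! t \<subset> Zs ! Suc t) \<longrightarrow> length Zs \<le> Suc d)"

text \<open>Affine cone over sing(omega) in C^(n+1) (including the vertex).\<close>
definition sing_cone :: "('n::finite \<Rightarrow> 'n mpoly) \<Rightarrow> ('n \<Rightarrow> complex) set" where
  "sing_cone A = zero_set (range A)"

text \<open>omega \<in> F^1(P^n, e), with n + 1 = CARD('n).  sing(omega) \<subseteq> P^n has codimension \<ge> 2
  iff its affine cone in C^(n+1) has codimension \<ge> 2, i.e. dimension \<le> CARD('n) - 2.\<close>
definition foliation :: "nat \<Rightarrow> ('n::finite \<Rightarrow> 'n mpoly) \<Rightarrow> bool" where
  "foliation e A \<longleftrightarrow>
     (\<forall>i. homogeneous (e - 1) (A i)) \<and> (\<exists>i. A i \<noteq> 0) \<and>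
     (\<Sum>i\<in>UNIV. mvar i * A i) = 0 \<and>
     (\<forall>i j k. wedge_dform A i j k = 0) \<and>
     dim_le (sing_cone A) (card (UNIV :: 'n set) - 2)"

definition J_ideal :: "('n::finite \<Rightarrow> 'n mpoly) \<Rightarrow> 'n mpoly set" where
  "J_ideal A = gen_ideal (range A)"

definition K_ideal :: "('n::finite \<Rightarrow> 'n mpoly) \<Rightarrow> 'n mpoly set" where
  "K_ideal A = ideal_quot (J_ideal A) (gen_ideal {dform A j k | j k. True})"

text \<open>Kupka set: closure (Zariski, in P^n) of the points of sing(omega) where d omega \<noteq> 0;
  represented by its (punctured) affine cone in C^(n+1) - {0}.\<close>
definition kupka_cone :: "('n::finite \<Rightarrow> 'n mpoly) \<Rightarrow> ('n \<Rightarrow> complex) set" where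
  "kupka_cone A = zariski_closure
      {x. x \<noteq> (\<lambda>_. 0) \<and> x \<in> sing_cone A \<and> (\<exists>j k. meval (dform A j k) x \<noteq> 0)} - {\<lambda>_. 0}"

text \<open>Homogeneous vanishing ideal of a projective set, given by its punctured cone.\<close>
definition vanishing_ideal :: "('n::finite \<Rightarrow> complex) set \<Rightarrow> 'n mpoly set" where
  "vanishing_ideal X = {f. \<forall>x\<in>X. meval f x = 0}"

end

theory Submission
  imports Defs "HOL-Computational_Algebra.Fundamental_Theorem_Algebra" "HOL-Analysis.Continuum_Not_Denumerable"
begin

text \<open>If \<open>f d\<omega> \<in> J\<close>, then \<open>f\<close> vanishes wherever \<open>\<omega>\<close> does and \<open>d\<omega>\<close> does not; this gives
  \<open>K \<subseteq> I(\<K>\<^sub>s\<^sub>e\<^sub>t)\<close>. Conversely, let \<open>f\<close> vanish on the Kupka points. Then \<open>f\<close> vanishes at every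
  point of the cone over \<open>sing(\<omega>)\<close> where \<open>d\<omega> \<noteq> 0\<close>: the only such point that is not a Kupka
  point is the vertex, where \<open>d\<omega>(0) \<noteq> 0\<close> forces \<open>e = 2\<close>; then \<open>\<omega>\<close> is linear, a common zero
  \<open>y \<noteq> 0\<close> of two of its coefficients spans a punctured line of Kupka points, and \<open>f(0) = 0\<close> by
  continuity. Hence \<open>f g\<close> vanishes on the zero set of \<open>J\<close> for every \<open>g\<close> in the ideal of \<open>d\<omega>\<close>,
  and the Nullstellensatz together with \<open>J = \<surd>J\<close> gives \<open>f g \<in> J\<close>.

  The Nullstellensatz is proved with an ideal \<open>P\<close> maximal among those avoiding the powers of
  \<open>h\<close>. Such a \<open>P\<close> is prime, and since \<open>\<complex>\<close> is uncountable while \<open>\<complex>[x]\<close> has countable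
  dimension, every \<open>x\<^sub>i\<close> is congruent to a constant \<open>a\<^sub>i\<close> modulo \<open>P\<close>; then \<open>a\<close> is a zero of
  the ideal at which \<open>h\<close> does not vanish.\<close>

definition mono_eval :: "('n::finite \<Rightarrow>\<^sub>0 nat) \<Rightarrow> ('n \<Rightarrow> complex) \<Rightarrow> complex" where
  "mono_eval m x = (\<Prod>i\<in>UNIV. x i ^ Poly_Mapping.lookup m i)"

definition mconst :: "complex \<Rightarrow> 'n mpoly" where
  "mconst c = Poly_Mapping.single 0 c"

lemma mono_eval_add: "mono_eval (a + b) x = mono_eval a x * mono_eval b x"
  by (simp add: mono_eval_def lookup_add power_add prod.distrib)

lemma mono_eval_zero [simp]: "mono_eval 0 x = 1"
  by (simp add: mono_eval_def)

lemma meval_mono_eval: "meval p x = (\<Sum>m\<in>Poly_Mapping.keys p. Poly_Mapping.lookup p m * mono_eval m x)"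
  by (simp add: meval_def mono_eval_def)

lemma meval_superset:
  assumes "finite S" "Poly_Mapping.keys p \<subseteq> S"
  shows "meval p x = (\<Sum>m\<in>S. Poly_Mapping.lookup p m * mono_eval m x)"
  unfolding meval_mono_eval
  by (rule sum.mono_neutral_left) (use assms in \<open>auto simp: in_keys_iff\<close>)

lemma meval_zero [simp]: "meval 0 x = 0"
  by (simp add: meval_def)

lemma meval_add [simp]: "meval (p + q) x = meval p x + meval q x"
proof -
  let ?S = "Poly_Mapping.keys p \<union> Poly_Mapping.keys q"
  have "meval (p + q) x = (\<Sum>m\<in>?S. Poly_Mapping.lookup (p + q) m * mono_eval m x)"
    by (rule meval_superset) (use keys_add[of p q] in auto)
  also have "\<dots> = (\<Sum>m\<in>?S. Poly_Mapping.lookup p m * mono_eval m x)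
      + (\<Sum>m\<in>?S. Poly_Mapping.lookup q m * mono_eval m x)"
    by (simp add: lookup_add distrib_right sum.distrib)
  also have "\<dots> = meval p x + meval q x"
    by (simp add: meval_superset[symmetric])
  finally show ?thesis .
qed

lemma meval_single [simp]: "meval (Poly_Mapping.single m c) x = c * mono_eval m x"
  by (simp add: meval_mono_eval)

lemma meval_sum: "meval (\<Sum>a\<in>A. f a) x = (\<Sum>a\<in>A. meval (f a) x)"
  by (induction A rule: infinite_finite_induct) auto

lemma mpoly_sum_single_lookup:
  "p = (\<Sum>m\<in>Poly_Mapping.keys p. Poly_Mapping.single m (Poly_Mapping.lookup p m))"
  by (rule poly_mapping_eqI) (simp add: lookup_sum lookup_single when_def in_keys_iff)

lemma meval_mult [simp]: "meval (p * q) x = meval p x * meval q x"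
proof -
  have "p * q = (\<Sum>a\<in>Poly_Mapping.keys p. \<Sum>b\<in>Poly_Mapping.keys q.
          Poly_Mapping.single a (Poly_Mapping.lookup p a) * Poly_Mapping.single b (Poly_Mapping.lookup q b))"
    by (subst mpoly_sum_single_lookup[of p], subst mpoly_sum_single_lookup[of q])
      (simp add: sum_distrib_left sum_distrib_right sum.swap[of _ "Poly_Mapping.keys q"])
  then have "meval (p * q) x = (\<Sum>a\<in>Poly_Mapping.keys p. \<Sum>b\<in>Poly_Mapping.keys q.
      Poly_Mapping.lookup p a * mono_eval a x * (Poly_Mapping.lookup q b * mono_eval b x))"
    by (simp add: meval_sum mult_single mono_eval_add mult_ac)
  also have "\<dots> = meval p x * meval q x"
    by (simp add: meval_mono_eval sum_product)
  finally show ?thesis .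
qed

lemma mono_eval_single: "mono_eval (Poly_Mapping.single i 1) x = x i"
proof -
  have "(\<Prod>l\<in>UNIV. x l ^ (if i = l then Suc 0 else 0)) = (\<Prod>l\<in>{i}. x l ^ (if i = l then Suc 0 else 0))"
    by (rule prod.mono_neutral_right) auto
  then show ?thesis by (simp add: mono_eval_def lookup_single when_def)
qed

lemma meval_mvar [simp]: "meval (mvar i) x = x i"
  unfolding mvar_def meval_single mono_eval_single by simp

lemma meval_mconst [simp]: "meval (mconst c) x = c"
  by (simp add: mconst_def)

lemma mconst_mult: "mconst (a * b) = mconst a * mconst b"
  by (simp add: mconst_def mult_single)

lemma mconst_add: "mconst (a + b) = mconst a + mconst b"
  by (simp add: mconst_def single_add)

lemma mconst_one [simp]: "mconst 1 = 1"
  by (simp add: mconst_def)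

lemma mconst_zero [simp]: "mconst 0 = 0"
  by (simp add: mconst_def)

lemma single_eq_mconst_mult: "Poly_Mapping.single m c = mconst c * Poly_Mapping.single m 1"
  by (simp add: mconst_def mult_single)

lemma continuous_on_meval_line: "continuous_on UNIV (\<lambda>t::complex. meval p (\<lambda>i. t * y i))"
  unfolding meval_def by (intro continuous_intros)

lemma ideal_zero: "is_ideal I \<Longrightarrow> 0 \<in> I"
  by (simp add: is_ideal_def)

lemma ideal_add: "is_ideal I \<Longrightarrow> f \<in> I \<Longrightarrow> g \<in> I \<Longrightarrow> f + g \<in> I"
  by (simp add: is_ideal_def)

lemma ideal_mult_left: "is_ideal I \<Longrightarrow> f \<in> I \<Longrightarrow> h * f \<in> I"
  by (simp add: is_ideal_def)

lemma ideal_mult_right: "is_ideal I \<Longrightarrow> f \<in> I \<Longrightarrow> f * h \<in> I"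
  by (simp add: is_ideal_def mult.commute)

lemma ideal_diff: "is_ideal I \<Longrightarrow> f \<in> I \<Longrightarrow> g \<in> I \<Longrightarrow> f - g \<in> I"
  using ideal_add[of I f "- g"] ideal_mult_left[of I g "- 1"] by simp

lemma ideal_sum: "is_ideal I \<Longrightarrow> (\<And>a. a \<in> A \<Longrightarrow> f a \<in> I) \<Longrightarrow> (\<Sum>a\<in>A. f a) \<in> I"
  by (induction A rule: infinite_finite_induct) (auto simp: ideal_zero ideal_add)

lemma ideal_mconst_imp_one:
  assumes "is_ideal I" "mconst c \<in> I" "c \<noteq> 0"
  shows "1 \<in> I"
  using ideal_mult_left[OF assms(1,2), of "mconst (1 / c)"] assms(3) by (simp flip: mconst_mult)

lemma is_ideal_gen_ideal: "is_ideal (gen_ideal G)"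
  unfolding gen_ideal_def is_ideal_def by auto

lemma gen_ideal_superset: "G \<subseteq> gen_ideal G"
  unfolding gen_ideal_def by auto

lemma gen_ideal_least: "is_ideal I \<Longrightarrow> G \<subseteq> I \<Longrightarrow> gen_ideal G \<subseteq> I"
  unfolding gen_ideal_def by auto

lemma is_ideal_vanishing: "is_ideal {p. \<forall>x\<in>Z. meval p x = 0}"
  unfolding is_ideal_def by auto

lemma zero_set_gen_ideal: "zero_set (gen_ideal G) = zero_set G"
proof
  show "zero_set G \<subseteq> zero_set (gen_ideal G)"
  proof
    fix x assume "x \<in> zero_set G"
    then have "G \<subseteq> {p. \<forall>y\<in>{x}. meval p y = 0}" by (simp add: zero_set_def subset_iff)
    then have "gen_ideal G \<subseteq> {p. \<forall>y\<in>{x}. meval p y = 0}"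
      by (rule gen_ideal_least[OF is_ideal_vanishing])
    then show "x \<in> zero_set (gen_ideal G)" by (auto simp: zero_set_def)
  qed
  show "zero_set (gen_ideal G) \<subseteq> zero_set G"
    using gen_ideal_superset unfolding zero_set_def by blast
qed

lemma is_ideal_Union_chain:
  assumes "\<C> \<noteq> {}" "subset.chain {I. is_ideal I} \<C>"
  shows "is_ideal (\<Union>\<C>)"
  unfolding is_ideal_def
proof (intro conjI ballI allI)
  have ideals: "\<And>I. I \<in> \<C> \<Longrightarrow> is_ideal I"
    using assms(2) unfolding subset.chain_def by blast
  show "0 \<in> \<Union>\<C>" using assms(1) ideals ideal_zero by blast
  show "h * f \<in> \<Union>\<C>" if "f \<in> \<Union>\<C>" for f h
    using that ideals ideal_mult_left by blast
  fix f g assume "f \<in> \<Union>\<C>" "g \<in> \<Union>\<C>"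
  then obtain I I' where I: "I \<in> \<C>" "I' \<in> \<C>" "f \<in> I" "g \<in> I'" by auto
  then have "I \<subseteq> I' \<or> I' \<subseteq> I" using assms(2) unfolding subset.chain_def by blast
  then show "f + g \<in> \<Union>\<C>"
    using I ideals[of I] ideals[of I'] ideal_add by blast
qed

lemma is_ideal_extension:
  assumes P: "is_ideal P"
  shows "is_ideal {p + u * g | p u. p \<in> P}"
  unfolding is_ideal_def
proof (intro conjI ballI allI)
  show "0 \<in> {p + u * g | p u. p \<in> P}"
  proof (intro CollectI exI conjI)
    show "0 = 0 + 0 * g" by simp
  qed (rule ideal_zero[OF P])
  fix f f' assume "f \<in> {p + u * g | p u. p \<in> P}" "f' \<in> {p + u * g | p u. p \<in> P}"
  then obtain p u p' u' where pu: "f = p + u * g" "f' = p' + u' * g" "p \<in> P" "p' \<in> P" by auto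
  show "f + f' \<in> {p + u * g | p u. p \<in> P}"
  proof (intro CollectI exI conjI)
    show "f + f' = (p + p') + (u + u') * g" using pu by (simp add: algebra_simps)
  qed (rule ideal_add[OF P pu(3,4)])
next
  fix f w assume "f \<in> {p + u * g | p u. p \<in> P}"
  then obtain p u where pu: "f = p + u * g" "p \<in> P" by auto
  show "w * f \<in> {p + u * g | p u. p \<in> P}"
  proof (intro CollectI exI conjI)
    show "w * f = w * p + (w * u) * g" using pu by (simp add: algebra_simps)
  qed (rule ideal_mult_left[OF P pu(2)])
qed

section \<open>Hilbert's Nullstellensatz\<close>

text \<open>An ideal maximal among those avoiding the powers of \<open>h\<close>; maximality is stated in the form
  used below: adjoining any \<open>g \<notin> P\<close> captures a power of \<open>h\<close>.\<close>

locale power_avoiding_maximal =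
  fixes P :: "'n::finite mpoly set" and h :: "'n mpoly"
  assumes ideal: "is_ideal P"
    and no_power: "h ^ k \<notin> P"
    and maximal: "g \<notin> P \<Longrightarrow> \<exists>m p u. p \<in> P \<and> h ^ m = p + u * g"
begin

lemma one_notin: "1 \<notin> P"
  using no_power[of 0] by simp

lemma mconst_notin: "c \<noteq> 0 \<Longrightarrow> mconst c \<notin> P"
  using ideal_mconst_imp_one[OF ideal] one_notin by blast

lemma saturated: assumes "g * h ^ k \<in> P" shows "g \<in> P"
proof (rule ccontr)
  assume "g \<notin> P"
  then obtain m p u where p: "p \<in> P" "h ^ m = p + u * g" using maximal by blast
  have "h ^ (m + k) = p * h ^ k + u * (g * h ^ k)"
    by (simp add: power_add p(2) algebra_simps)
  also have "\<dots> \<in> P" using p(1) assms ideal ideal_add ideal_mult_left ideal_mult_right by blast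
  finally show False using no_power by blast
qed

lemma prime: assumes "g * g' \<in> P" shows "g \<in> P \<or> g' \<in> P"
proof (rule ccontr)
  assume "\<not> (g \<in> P \<or> g' \<in> P)"
  then obtain m p u where p: "p \<in> P" "h ^ m = p + u * g" "g' \<notin> P" using maximal by blast
  have "g' * h ^ m = g' * p + u * (g * g')" by (simp add: p(2) algebra_simps)
  also have "\<dots> \<in> P" using p(1) assms ideal ideal_add ideal_mult_left ideal_mult_right by blast
  finally show False using saturated p(3) by blast
qed

end

lemma power_avoiding_maximal_exists:
  assumes I: "is_ideal I" and h: "\<And>k. h ^ k \<notin> I"
  obtains P where "I \<subseteq> P" "power_avoiding_maximal P h"
proof -
  let ?\<A> = "{P. is_ideal P \<and> I \<subseteq> P \<and> (\<forall>k. h ^ k \<notin> P)}"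
  have "\<exists>M\<in>?\<A>. \<forall>X\<in>?\<A>. M \<subseteq> X \<longrightarrow> X = M"
  proof (rule subset_Zorn_nonempty)
    show "?\<A> \<noteq> {}" using I h by blast
  next
    fix \<C> assume ne: "\<C> \<noteq> {}" and chain: "subset.chain ?\<A> \<C>"
    then have sub: "\<C> \<subseteq> ?\<A>" by (simp add: subset.chain_def)
    have "subset.chain {I. is_ideal I} \<C>"
      using chain by (auto simp: subset.chain_def)
    then have "is_ideal (\<Union>\<C>)" by (rule is_ideal_Union_chain[OF ne])
    moreover have "I \<subseteq> \<Union>\<C>" using ne sub by blast
    moreover have "\<forall>k. h ^ k \<notin> \<Union>\<C>" using sub by blast
    ultimately show "\<Union>\<C> \<in> ?\<A>" by simp
  qed
  then obtain P where "P \<in> ?\<A>" and max_\<A>: "\<forall>Q\<in>?\<A>. P \<subseteq> Q \<longrightarrow> Q = P" ..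
  then have P: "is_ideal P" "I \<subseteq> P" "\<And>k. h ^ k \<notin> P" by simp_all
  have max: "Q = P" if "is_ideal Q" "P \<subseteq> Q" "\<forall>k. h ^ k \<notin> Q" for Q
  proof -
    have "Q \<in> ?\<A>" using that P(2) by auto
    then show ?thesis using max_\<A> that(2) by blast
  qed
  have "power_avoiding_maximal P h"
  proof
    fix g assume g: "g \<notin> P"
    let ?Q = "{p + u * g | p u. p \<in> P}"
    have "P \<subseteq> ?Q"
    proof
      fix p assume "p \<in> P"
      moreover have "p = p + 0 * g" by simp
      ultimately show "p \<in> ?Q" by blast
    qed
    have "g = 0 + 1 * g" by simp
    then have "g \<in> ?Q" using ideal_zero[OF P(1)] by blast
    have "\<not> (\<forall>k. h ^ k \<notin> ?Q)"
    proof
      assume "\<forall>k. h ^ k \<notin> ?Q"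
      then have "?Q = P" by (rule max[OF is_ideal_extension[OF P(1)] \<open>P \<subseteq> ?Q\<close>])
      then show False using \<open>g \<in> ?Q\<close> g by simp
    qed
    then show "\<exists>m p u. p \<in> P \<and> h ^ m = p + u * g" by blast
  qed (use P in auto)
  then show thesis using P(2) that by blast
qed

lemma ideal_diff_mconst_mult:
  assumes "is_ideal P" "g - mconst c \<in> P" "g' - mconst c' \<in> P"
  shows "g * g' - mconst (c * c') \<in> P"
proof -
  have "g * g' - mconst (c * c') = (g - mconst c) * g' + mconst c * (g' - mconst c')"
    by (simp add: mconst_mult algebra_simps)
  then show ?thesis using assms ideal_add ideal_mult_left ideal_mult_right by metis
qed

lemma ideal_diff_mconst_power:
  "is_ideal P \<Longrightarrow> g - mconst c \<in> P \<Longrightarrow> g ^ k - mconst (c ^ k) \<in> P"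
  by (induction k) (auto simp: ideal_zero ideal_diff_mconst_mult)

lemma ideal_diff_mconst_prod:
  "is_ideal P \<Longrightarrow> (\<And>i. i \<in> S \<Longrightarrow> g i - mconst (c i) \<in> P)
    \<Longrightarrow> (\<Prod>i\<in>S. g i) - mconst (\<Prod>i\<in>S. c i) \<in> P"
  by (induction S rule: infinite_finite_induct) (auto simp: ideal_zero ideal_diff_mconst_mult)

lemma ideal_diff_mconst_sum:
  "is_ideal P \<Longrightarrow> (\<And>i. i \<in> S \<Longrightarrow> g i - mconst (c i) \<in> P)
    \<Longrightarrow> (\<Sum>i\<in>S. g i) - mconst (\<Sum>i\<in>S. c i) \<in> P"
proof (induction S rule: infinite_finite_induct)
  case (insert x F)
  have "(\<Sum>i\<in>insert x F. g i) - mconst (\<Sum>i\<in>insert x F. c i)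
      = (g x - mconst (c x)) + ((\<Sum>i\<in>F. g i) - mconst (\<Sum>i\<in>F. c i))"
    using insert by (simp add: mconst_add)
  moreover have "g x - mconst (c x) \<in> P" "(\<Sum>i\<in>F. g i) - mconst (\<Sum>i\<in>F. c i) \<in> P"
    using insert by auto
  ultimately show ?case using ideal_add[OF insert.prems(1)] by metis
qed (auto simp: ideal_zero)

lemma single_one_eq_prod_mvar:
  "Poly_Mapping.single (m :: 'n::finite \<Rightarrow>\<^sub>0 nat) (1::complex) = (\<Prod>i\<in>UNIV. mvar i ^ Poly_Mapping.lookup m i)"
proof -
  have mvar_power: "mvar i ^ k = Poly_Mapping.single (Poly_Mapping.single i k) (1::complex)" for i k
    by (induction k) (simp_all add: mvar_def mult_single flip: single_add)
  have single_sum: "Poly_Mapping.single (\<Sum>i\<in>S. f i) (1::complex) = (\<Prod>i\<in>S. Poly_Mapping.single (f i) 1)"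
    for S and f :: "'n \<Rightarrow> 'n \<Rightarrow>\<^sub>0 nat"
  proof (induction S rule: infinite_finite_induct)
    case (insert x F)
    then show ?case by (simp add: mult_single flip: insert.IH)
  qed simp_all
  have "m = (\<Sum>i\<in>UNIV. Poly_Mapping.single i (Poly_Mapping.lookup m i))"
    by (rule poly_mapping_eqI) (simp add: lookup_sum lookup_single when_def)
  then have "Poly_Mapping.single m (1::complex)
      = Poly_Mapping.single (\<Sum>i\<in>UNIV. Poly_Mapping.single i (Poly_Mapping.lookup m i)) 1"
    by (rule arg_cong)
  also have "\<dots> = (\<Prod>i\<in>UNIV. mvar i ^ Poly_Mapping.lookup m i)"
    by (simp add: single_sum mvar_power)
  finally show ?thesis .
qed

lemma ideal_diff_mconst_meval:
  assumes P: "is_ideal P" and a: "\<And>i. mvar i - mconst (a i) \<in> P"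
  shows "p - mconst (meval p a) \<in> P"
proof -
  have monomial: "Poly_Mapping.single m 1 - mconst (mono_eval m a) \<in> P" for m
    unfolding single_one_eq_prod_mvar mono_eval_def
    by (rule ideal_diff_mconst_prod[OF P]) (rule ideal_diff_mconst_power[OF P a])
  have "Poly_Mapping.single m (Poly_Mapping.lookup p m) - mconst (Poly_Mapping.lookup p m * mono_eval m a)
      = mconst (Poly_Mapping.lookup p m) * (Poly_Mapping.single m 1 - mconst (mono_eval m a))" for m
    by (subst single_eq_mconst_mult) (simp add: mconst_mult algebra_simps)
  then have "(\<Sum>m\<in>Poly_Mapping.keys p. Poly_Mapping.single m (Poly_Mapping.lookup p m))
      - mconst (\<Sum>m\<in>Poly_Mapping.keys p. Poly_Mapping.lookup p m * mono_eval m a) \<in> P"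
    by (intro ideal_diff_mconst_sum[OF P]) (simp add: ideal_mult_left[OF P monomial])
  then show ?thesis by (simp add: meval_mono_eval flip: mpoly_sum_single_lookup)
qed

definition usubst :: "complex poly \<Rightarrow> 'n mpoly \<Rightarrow> 'n mpoly" where
  "usubst q Y = poly (map_poly mconst q) Y"

lemma usubst_pCons [simp]: "usubst (pCons a q) Y = mconst a + Y * usubst q Y"
  by (simp add: usubst_def map_poly_pCons)

lemma usubst_0 [simp]: "usubst 0 Y = 0"
  by (simp add: usubst_def)

lemma usubst_add: "usubst (p + q) Y = usubst p Y + usubst q Y"
  by (induction p q rule: poly_induct2) (auto simp: mconst_add algebra_simps)

lemma usubst_smult: "usubst (smult a q) Y = mconst a * usubst q Y"
  by (induction q) (auto simp: mconst_mult algebra_simps)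

lemma usubst_mult: "usubst (p * q) Y = usubst p Y * usubst q Y"
  by (induction p) (auto simp: usubst_add usubst_smult algebra_simps)

lemma usubst_sum: "usubst (\<Sum>i\<in>S. f i) Y = (\<Sum>i\<in>S. usubst (f i) Y)"
  by (induction S rule: infinite_finite_induct) (auto simp: usubst_add)

lemma usubst_prod: "usubst (\<Prod>i\<in>S. f i) Y = (\<Prod>i\<in>S. usubst (f i) Y)"
  by (induction S rule: infinite_finite_induct) (auto simp: usubst_mult one_pCons)

lemma usubst_linear: "usubst [:- b, 1:] Y = Y - mconst b"
  by (simp add: mconst_def single_uminus)

context power_avoiding_maximal
begin

text \<open>Every nonzero univariate polynomial splits into linear factors over \<open>\<complex>\<close>, and \<open>P\<close> is prime.\<close>

lemma usubst_notin:
  assumes no_root: "\<And>r. Y - mconst r \<notin> P" and "q \<noteq> 0"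
  shows "usubst q Y \<notin> P"
  using \<open>q \<noteq> 0\<close>
proof (induction "degree q" arbitrary: q rule: less_induct)
  case less
  show ?case
  proof (cases "degree q = 0")
    case True
    then have "usubst q Y = mconst (coeff q 0)" "coeff q 0 \<noteq> 0"
      using less(2) by (metis degree_0_id usubst_0 usubst_pCons add_0_right mult_zero_right,
                        metis degree_0_id pCons_0_0)
    then show ?thesis using mconst_notin by simp
  next
    case False
    then have "\<not> constant (poly q)" using constant_degree[of q] by simp
    then obtain z where "poly q z = 0"
      using fundamental_theorem_of_algebra by blast
    then obtain q' where q': "q = [:- z, 1:] * q'"
      using poly_eq_0_iff_dvd by (blast elim: dvdE)
    with less(2) have "q' \<noteq> 0" by auto
    then have "degree q = degree [:- z, 1:] + degree q'"
      unfolding q' by (intro degree_mult_eq) auto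
    then have "degree q' < degree q" by simp
    then have "usubst q' Y \<notin> P" using less(1) \<open>q' \<noteq> 0\<close> by blast
    then show ?thesis
      unfolding q' usubst_mult usubst_linear using prime no_root by blast
  qed
qed

end

interpretation mpoly_vs: vector_space "\<lambda>c (p::'n::finite mpoly). mconst c * p"
  by unfold_locales (simp_all add: algebra_simps mconst_add mconst_mult)

text \<open>Polynomials supported on a fixed finite set of monomials form a finite-dimensional space.\<close>

lemma exists_nontrivial_linear_relation:
  fixes u :: "'b \<Rightarrow> 'n::finite mpoly"
  assumes F: "finite F" and T: "finite T" and card: "card T > card F"
    and keys: "\<And>a. a \<in> T \<Longrightarrow> Poly_Mapping.keys (u a) \<subseteq> F"
  shows "\<exists>c. (\<Sum>a\<in>T. mconst (c a) * u a) = 0 \<and> (\<exists>a\<in>T. c a \<noteq> 0)"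
proof (cases "inj_on u T")
  case False
  then obtain a b where ab: "a \<in> T" "b \<in> T" "a \<noteq> b" "u a = u b"
    unfolding inj_on_def by blast
  define c where "c x = (if x = a then 1 else if x = b then -1 else (0::complex))" for x
  have "(\<Sum>x\<in>T. mconst (c x) * u x) = (\<Sum>x\<in>{a, b}. mconst (c x) * u x)"
    by (rule sum.mono_neutral_right) (use T ab in \<open>auto simp: c_def\<close>)
  also have "\<dots> = 0" using ab by (simp add: c_def mconst_def single_uminus)
  finally show ?thesis using ab by (intro exI[of _ c]) (auto simp: c_def)
next
  case True
  define B where "B = (\<lambda>m. Poly_Mapping.single m (1::complex)) ` F"
  have "u ` T \<subseteq> mpoly_vs.span B"
  proof
    fix v assume "v \<in> u ` T"
    then obtain a where a: "a \<in> T" "v = u a" by auto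
    have "v = (\<Sum>m\<in>Poly_Mapping.keys v. mconst (Poly_Mapping.lookup v m) * Poly_Mapping.single m 1)"
      by (subst mpoly_sum_single_lookup) (simp add: single_eq_mconst_mult[symmetric])
    also have "\<dots> \<in> mpoly_vs.span B"
      by (intro mpoly_vs.span_sum mpoly_vs.span_scale mpoly_vs.span_base)
        (use a keys in \<open>auto simp: B_def\<close>)
    finally show "v \<in> mpoly_vs.span B" .
  qed
  moreover have "card B < card (u ` T)"
  proof -
    have "card B \<le> card F" using F by (simp add: B_def card_image_le)
    then show ?thesis using card True by (simp add: card_image)
  qed
  ultimately have "mpoly_vs.dependent (u ` T)"
    using mpoly_vs.independent_span_bound[of B "u ` T"] F by (force simp: B_def)
  then obtain S w where S: "finite S" "S \<subseteq> u ` T" "(\<Sum>v\<in>S. mconst (w v) * v) = 0" "\<exists>v\<in>S. w v \<noteq> 0"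
    unfolding mpoly_vs.dependent_explicit by blast
  define c where "c x = (if u x \<in> S then w (u x) else 0)" for x
  have "(\<Sum>x\<in>T. mconst (c x) * u x) = (\<Sum>x\<in>T \<inter> u -` S. mconst (c x) * u x)"
    by (rule sum.mono_neutral_right) (use T in \<open>auto simp: c_def\<close>)
  also have "\<dots> = (\<Sum>v\<in>u ` (T \<inter> u -` S). mconst (w v) * v)"
    by (subst sum.reindex) (use True in \<open>auto simp: c_def intro: inj_on_subset\<close>)
  also have "u ` (T \<inter> u -` S) = S" using S(2) by auto
  finally have "(\<Sum>x\<in>T. mconst (c x) * u x) = 0" using S(3) by simp
  moreover obtain v where "v \<in> S" "w v \<noteq> 0" using S(4) by blast
  moreover then obtain a where "a \<in> T" "u a = v" using S(2) by auto
  ultimately show ?thesis by (intro exI[of _ c]) (auto simp: c_def)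
qed

lemma countable_monomials: "countable (UNIV :: ('n::finite \<Rightarrow>\<^sub>0 nat) set)"
proof (rule countable_image_inj_on)
  show "countable (Poly_Mapping.lookup ` (UNIV :: ('n \<Rightarrow>\<^sub>0 nat) set))"
    by (rule countable_subset[OF subset_UNIV]) (rule countableI_type)
  show "inj_on Poly_Mapping.lookup (UNIV :: ('n \<Rightarrow>\<^sub>0 nat) set)"
    by (auto simp: inj_on_def poly_mapping_eqI)
qed

lemma complex_countable_range_infinite_fibre:
  fixes f :: "complex \<Rightarrow> 'b"
  assumes "countable (range f)"
  obtains v where "infinite (f -` {v})"
proof (rule ccontr)
  assume "\<not> thesis"
  then have "finite (f -` {v})" for v using that by blast
  then have "countable (\<Union>v\<in>range f. f -` {v})"
    using assms by (intro countable_UN) (auto intro: countable_finite)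
  moreover have "(\<Union>v\<in>range f. f -` {v}) = UNIV" by auto
  ultimately show False using uncountable_UNIV_complex by simp
qed

lemma lagrange_combination_nonzero:
  fixes c :: "complex \<Rightarrow> complex"
  assumes T: "finite T" and a0: "a0 \<in> T" "c a0 \<noteq> 0"
  shows "(\<Sum>a\<in>T. smult (c a) (\<Prod>b\<in>T - {a}. [:- b, 1:])) \<noteq> 0"
proof -
  have vanish: "c a * (\<Prod>b\<in>T - {a}. a0 - b) = 0" if "a \<in> T - {a0}" for a
    using that a0 T by (subst prod_zero) auto
  have "poly (\<Sum>a\<in>T. smult (c a) (\<Prod>b\<in>T - {a}. [:- b, 1:])) a0
      = (\<Sum>a\<in>T. c a * (\<Prod>b\<in>T - {a}. a0 - b))"
    by (simp add: poly_sum poly_prod)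
  also have "\<dots> = (\<Sum>a\<in>{a0}. c a * (\<Prod>b\<in>T - {a}. a0 - b))"
    by (rule sum.mono_neutral_right) (use T a0 vanish in auto)
  also have "\<dots> \<noteq> 0" using a0 T by simp
  finally show ?thesis by auto
qed

context power_avoiding_maximal
begin

lemma usubst_lagrange_combination_in:
  assumes T: "finite T"
    and p: "\<And>a. a \<in> T \<Longrightarrow> p a \<in> P"
    and hk: "\<And>a. a \<in> T \<Longrightarrow> h ^ k = p a + u a * (Y - mconst a)"
    and relation: "(\<Sum>a\<in>T. mconst (c a) * u a) = 0"
  shows "usubst (\<Sum>a\<in>T. smult (c a) (\<Prod>b\<in>T - {a}. [:- b, 1:])) Y \<in> P"
proof -
  have term_split: "mconst (c a) * h ^ k * (\<Prod>b\<in>T - {a}. Y - mconst b)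
      = mconst (c a) * p a * (\<Prod>b\<in>T - {a}. Y - mconst b) + mconst (c a) * u a * (\<Prod>b\<in>T. Y - mconst b)"
    if "a \<in> T" for a
  proof -
    have "(\<Prod>b\<in>T. Y - mconst b) = (Y - mconst a) * (\<Prod>b\<in>T - {a}. Y - mconst b)"
      using that T by (simp add: prod.remove)
    then show ?thesis unfolding hk[OF that] by (simp only:) (simp add: algebra_simps)
  qed
  have "usubst (\<Sum>a\<in>T. smult (c a) (\<Prod>b\<in>T - {a}. [:- b, 1:])) Y * h ^ k
      = (\<Sum>a\<in>T. mconst (c a) * h ^ k * (\<Prod>b\<in>T - {a}. Y - mconst b))"
    by (simp only: usubst_sum usubst_smult usubst_prod usubst_linear sum_distrib_right) (simp add: mult_ac)
  also have "\<dots> = (\<Sum>a\<in>T. mconst (c a) * p a * (\<Prod>b\<in>T - {a}. Y - mconst b))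
      + (\<Sum>a\<in>T. mconst (c a) * u a) * (\<Prod>b\<in>T. Y - mconst b)"
    by (simp add: term_split sum.distrib sum_distrib_right)
  also have "\<dots> \<in> P"
    unfolding relation using p
    by (simp, intro ideal_sum[OF ideal] ideal_mult_right[OF ideal] ideal_mult_left[OF ideal])
  finally show ?thesis by (rule saturated)
qed

text \<open>Otherwise \<open>\<complex>\<close> would inject into the countable-dimensional space \<open>\<complex>[x]/P\<close> via
  \<open>a \<mapsto> (x\<^sub>i - a)\<inverse>\<close>: uncountably many \<open>a\<close> share the exponent and support in the equations
  \<open>h\<^sup>k = p\<^sub>a + u\<^sub>a (x\<^sub>i - a)\<close>, and a linear relation among these \<open>u\<^sub>a\<close> yields a nonzero
  univariate polynomial in \<open>x\<^sub>i\<close> lying in \<open>P\<close>.\<close>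

lemma mvar_congruent_mconst: "\<exists>a. mvar i - mconst a \<in> P"
proof (rule ccontr)
  assume "\<nexists>a. mvar i - mconst a \<in> P"
  then have no_root: "\<And>a. mvar i - mconst a \<notin> P" by blast
  then have "\<forall>a. \<exists>m p u. p \<in> P \<and> h ^ m = p + u * (mvar i - mconst a)"
    using maximal by blast
  then obtain k p u where p: "\<And>a. p a \<in> P" and hk: "\<And>a. h ^ k a = p a + u a * (mvar i - mconst a)"
    by metis
  define f where "f a = (k a, Poly_Mapping.keys (u a))" for a
  have "range f \<subseteq> UNIV \<times> {S. finite S \<and> S \<subseteq> UNIV}" by (auto simp: f_def)
  moreover have "countable ((UNIV :: nat set) \<times> {S. finite S \<and> S \<subseteq> (UNIV :: ('n \<Rightarrow>\<^sub>0 nat) set)})"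
    using countable_Collect_finite_subset[OF countable_monomials]
    by (auto intro!: countable_SIGMA countableI_type)
  ultimately have "countable (range f)" by (rule countable_subset)
  then obtain v where "infinite (f -` {v})"
    by (rule complex_countable_range_infinite_fibre)
  then obtain T where T: "finite T" "card T = Suc (card (snd v))" "T \<subseteq> f -` {v}"
    using infinite_arbitrarily_large by blast
  then have "T \<noteq> {}" by auto
  then obtain a1 where "a1 \<in> T" by blast
  then have fin: "finite (snd v)" using T(3) by (auto simp: f_def)
  have keys: "Poly_Mapping.keys (u a) \<subseteq> snd v" if "a \<in> T" for a
    using that T(3) by (auto simp: f_def)
  have hk_T: "h ^ fst v = p a + u a * (mvar i - mconst a)" if "a \<in> T" for a
    using that T(3) hk[of a] by (auto simp: f_def)
  have "\<exists>c. (\<Sum>a\<in>T. mconst (c a) * u a) = 0 \<and> (\<exists>a\<in>T. c a \<noteq> 0)"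
    by (rule exists_nontrivial_linear_relation[OF fin T(1)]) (use T(2) keys in auto)
  then obtain c a0 where relation: "(\<Sum>a\<in>T. mconst (c a) * u a) = 0" and a0: "a0 \<in> T" "c a0 \<noteq> 0"
    by blast
  have "usubst (\<Sum>a\<in>T. smult (c a) (\<Prod>b\<in>T - {a}. [:- b, 1:])) (mvar i) \<in> P"
    by (rule usubst_lagrange_combination_in[OF T(1) p hk_T relation])
  then show False
    using usubst_notin[OF no_root lagrange_combination_nonzero[of T a0 c, OF T(1) a0]] by blast
qed

end

theorem nullstellensatz:
  assumes I: "is_ideal I" and vanish: "\<And>x. x \<in> zero_set I \<Longrightarrow> meval h x = 0"
  shows "\<exists>k. h ^ k \<in> I"
proof (rule ccontr)
  assume "\<nexists>k. h ^ k \<in> I"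
  then obtain P where "I \<subseteq> P" and "power_avoiding_maximal P h"
    using power_avoiding_maximal_exists[OF I] by blast
  interpret power_avoiding_maximal P h by fact
  obtain a where "\<And>i. mvar i - mconst (a i) \<in> P" using mvar_congruent_mconst by metis
  then have congruent: "p - mconst (meval p a) \<in> P" for p
    by (rule ideal_diff_mconst_meval[OF ideal])
  have "a \<in> zero_set I"
  proof (unfold zero_set_def, intro CollectI ballI)
    fix g assume "g \<in> I"
    then have "g - (g - mconst (meval g a)) \<in> P"
      using \<open>I \<subseteq> P\<close> ideal_diff[OF ideal _ congruent] by blast
    then show "meval g a = 0" using mconst_notin by fastforce
  qed
  then have "h ^ 1 \<in> P" using congruent[of h] vanish by simp
  then show False using no_power by blast
qed

section \<open>Homogeneous polynomials\<close>

lemma mono_eval_scale: "mono_eval m (\<lambda>i. t * x i) = t ^ mdeg m * mono_eval m x"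
  by (simp add: mono_eval_def mdeg_def power_mult_distrib prod.distrib power_sum)

lemma homogeneous_meval_scale:
  assumes "homogeneous d p"
  shows "meval p (\<lambda>i. t * x i) = t ^ d * meval p x"
  using assms by (simp add: meval_mono_eval homogeneous_def mono_eval_scale sum_distrib_left mult_ac)

lemma homogeneous_meval_origin:
  assumes "homogeneous d p" "d \<ge> 1"
  shows "meval p (\<lambda>_. 0) = 0"
  using homogeneous_meval_scale[OF assms(1), of 0 "\<lambda>_. 0"] assms(2) by (cases d) auto

lemma homogeneous_0_meval:
  assumes "homogeneous 0 p"
  shows "meval p x = meval p (\<lambda>_. 0)"
  using homogeneous_meval_scale[OF assms, of 0 x] by simp

lemma homogeneous_diff: "homogeneous d p \<Longrightarrow> homogeneous d q \<Longrightarrow> homogeneous d (p - q)"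
  unfolding homogeneous_def using keys_diff[of p q] by blast

lemma mdeg_minus_single:
  assumes "Poly_Mapping.lookup m j \<noteq> 0"
  shows "mdeg (m - Poly_Mapping.single j 1) = mdeg m - 1"
proof -
  have "mdeg m = (\<Sum>i\<in>UNIV. Poly_Mapping.lookup (m - Poly_Mapping.single j 1) i + (if i = j then 1 else 0))"
    unfolding mdeg_def by (rule sum.cong) (use assms in \<open>auto simp: lookup_minus lookup_single\<close>)
  then show ?thesis by (simp add: sum.distrib mdeg_def)
qed

lemma homogeneous_mpderiv:
  assumes "homogeneous d p"
  shows "homogeneous (d - 1) (mpderiv j p)"
  unfolding homogeneous_def
proof
  fix m' assume "m' \<in> Poly_Mapping.keys (mpderiv j p)"
  then have "m' \<in> (\<Union>m\<in>Poly_Mapping.keys p. Poly_Mapping.keys (Poly_Mapping.single (m - Poly_Mapping.single j 1)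
              (Poly_Mapping.lookup p m * of_nat (Poly_Mapping.lookup m j))))"
    unfolding mpderiv_def by (rule subsetD[OF keys_sum])
  then obtain m where m: "m \<in> Poly_Mapping.keys p"
    "m' \<in> Poly_Mapping.keys (Poly_Mapping.single (m - Poly_Mapping.single j 1)
              (Poly_Mapping.lookup p m * of_nat (Poly_Mapping.lookup m j)))"
    by blast
  then have nonzero: "Poly_Mapping.lookup m j \<noteq> 0" and m': "m' = m - Poly_Mapping.single j 1"
    by (auto split: if_splits)
  have "mdeg m = d" using assms m(1) unfolding homogeneous_def by blast
  then show "mdeg m' = d - 1" unfolding m' mdeg_minus_single[OF nonzero] by simp
qed

lemma homogeneous_dform:
  assumes "\<And>i. homogeneous d (A i)"
  shows "homogeneous (d - 1) (dform A j k)"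
  unfolding dform_def by (intro homogeneous_diff homogeneous_mpderiv assms)

lemma mdeg_eq_1_imp_single:
  assumes "mdeg (m :: 'n::finite \<Rightarrow>\<^sub>0 nat) = 1"
  shows "\<exists>l. m = Poly_Mapping.single l 1"
proof -
  obtain l where l: "Poly_Mapping.lookup m l \<noteq> 0"
    using assms by (metis mdeg_def sum.neutral zero_neq_one)
  have sum: "Poly_Mapping.lookup m l + (\<Sum>i\<in>UNIV - {l}. Poly_Mapping.lookup m i) = 1"
    using assms unfolding mdeg_def by (simp add: sum.remove)
  then have "(\<Sum>i\<in>UNIV - {l}. Poly_Mapping.lookup m i) = 0" using l by linarith
  then have "Poly_Mapping.lookup m l = 1" "\<forall>i\<in>UNIV - {l}. Poly_Mapping.lookup m i = 0"
    using sum by simp_all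
  then have "m = Poly_Mapping.single l 1"
    by (intro poly_mapping_eqI) (auto simp: lookup_single when_def)
  then show ?thesis by blast
qed

lemma homogeneous_1_meval:
  assumes "homogeneous 1 (p :: 'n::finite mpoly)"
  shows "meval p x = (\<Sum>l\<in>UNIV. Poly_Mapping.lookup p (Poly_Mapping.single l 1) * x l)"
proof -
  let ?S = "(\<lambda>l. Poly_Mapping.single l (1::nat)) ` (UNIV :: 'n set)"
  have inj: "inj (\<lambda>l. Poly_Mapping.single l (1::nat))"
    by (rule injI) (metis lookup_single_eq lookup_single_not_eq zero_neq_one)
  have "Poly_Mapping.keys p \<subseteq> ?S"
    using assms mdeg_eq_1_imp_single unfolding homogeneous_def by blast
  then have "meval p x = (\<Sum>m\<in>?S. Poly_Mapping.lookup p m * mono_eval m x)"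
    by (intro meval_superset) auto
  also have "\<dots> = (\<Sum>l\<in>UNIV. Poly_Mapping.lookup p (Poly_Mapping.single l 1) * x l)"
    by (subst sum.reindex[OF inj]) (simp only: comp_def mono_eval_single)
  finally show ?thesis .
qed

lemma linear_forms_common_zero:
  fixes \<alpha> \<beta> :: "'n::finite \<Rightarrow> complex"
  assumes "card (UNIV :: 'n set) \<ge> 3"
  shows "\<exists>y. y \<noteq> (\<lambda>_. 0) \<and> (\<Sum>l\<in>UNIV. \<alpha> l * y l) = 0 \<and> (\<Sum>l\<in>UNIV. \<beta> l * y l) = 0"
proof -
  obtain p :: 'n where True by blast
  have "\<exists>q. p \<noteq> q"
  proof (rule ccontr)
    assume "\<nexists>q. p \<noteq> q"
    then have "card (UNIV :: 'n set) \<le> card {p}" by (intro card_mono) auto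
    then show False using assms by simp
  qed
  then obtain q where "p \<noteq> q" by blast
  define u where "u l = mconst (\<alpha> l) * mvar p + mconst (\<beta> l) * mvar q" for l
  define F where "F = {Poly_Mapping.single p (1::nat), Poly_Mapping.single q 1}"
  have monomial: "mconst a * mvar r = Poly_Mapping.single (Poly_Mapping.single r 1) a" for a r
    by (simp add: mconst_def mvar_def mult_single)
  have keys: "Poly_Mapping.keys (u l) \<subseteq> F" for l
    unfolding u_def monomial by (rule order_trans[OF keys_add]) (auto simp: F_def)
  have "card F \<le> 2" by (simp add: F_def card_insert_if)
  then have "card F < card (UNIV :: 'n set)" using assms by linarith
  then obtain c where c: "(\<Sum>l\<in>UNIV. mconst (c l) * u l) = 0" "\<exists>l. c l \<noteq> 0"
    using exists_nontrivial_linear_relation[of F UNIV u] keys by (auto simp: F_def)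
  have relation: "(\<Sum>l\<in>UNIV. c l * (\<alpha> l * x p + \<beta> l * x q)) = 0" for x
    using arg_cong[OF c(1), of "\<lambda>g. meval g x"] by (simp add: meval_sum u_def)
  show ?thesis
  proof (intro exI conjI)
    show "c \<noteq> (\<lambda>_. 0)" using c(2) by auto
    show "(\<Sum>l\<in>UNIV. \<alpha> l * c l) = 0"
      using relation[of "\<lambda>i. if i = p then 1 else 0"] \<open>p \<noteq> q\<close> by (simp add: mult.commute)
    show "(\<Sum>l\<in>UNIV. \<beta> l * c l) = 0"
      using relation[of "\<lambda>i. if i = q then 1 else 0"] \<open>p \<noteq> q\<close> by (simp add: mult.commute)
  qed
qed

lemma continuous_vanishing_off_origin:
  fixes g :: "complex \<Rightarrow> complex"
  assumes "continuous_on UNIV g" and "\<And>t. t \<noteq> 0 \<Longrightarrow> g t = 0"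
  shows "g 0 = 0"
proof -
  have "(g \<longlongrightarrow> g 0) (at 0)" using assms(1) by (simp add: continuous_on_def)
  moreover have "(g \<longlongrightarrow> 0) (at 0)"
  proof (rule tendsto_eventually)
    show "eventually (\<lambda>t. g t = 0) (at 0)"
      unfolding eventually_at by (rule exI[of _ 1]) (auto simp: assms(2))
  qed
  ultimately show ?thesis using tendsto_unique by (metis at_neq_bot)
qed

section \<open>The Kupka set\<close>

definition kupka_points :: "('n::finite \<Rightarrow> 'n mpoly) \<Rightarrow> ('n \<Rightarrow> complex) set" where
  "kupka_points A = {x. x \<noteq> (\<lambda>_. 0) \<and> x \<in> sing_cone A \<and> (\<exists>j k. meval (dform A j k) x \<noteq> 0)}"

lemma vanishing_ideal_kupka_cone:
  "vanishing_ideal (kupka_cone A) = {f. \<forall>x\<in>kupka_points A. meval f x = 0}"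
proof (intro equalityI subsetI CollectI)
  fix f assume "f \<in> vanishing_ideal (kupka_cone A)"
  moreover have "kupka_points A \<subseteq> kupka_cone A"
    unfolding kupka_cone_def kupka_points_def zariski_closure_def by blast
  ultimately show "\<forall>x\<in>kupka_points A. meval f x = 0" by (auto simp: vanishing_ideal_def)
next
  fix f assume "f \<in> {f. \<forall>x\<in>kupka_points A. meval f x = 0}"
  then have "kupka_points A \<subseteq> zero_set {f}" by (auto simp: zero_set_def)
  then have "zariski_closure (kupka_points A) \<subseteq> zero_set {f}"
    unfolding zariski_closure_def zariski_closed_def by blast
  then show "f \<in> vanishing_ideal (kupka_cone A)"
    by (auto simp: kupka_cone_def kupka_points_def vanishing_ideal_def zero_set_def)
qed

lemma zero_set_J_ideal: "zero_set (J_ideal A) = sing_cone A"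
  by (simp add: J_ideal_def sing_cone_def zero_set_gen_ideal)

lemma K_ideal_vanishes_on_kupka_points:
  assumes "f \<in> K_ideal A" "x \<in> kupka_points A"
  shows "meval f x = 0"
proof -
  obtain j k where x: "x \<in> sing_cone A" "meval (dform A j k) x \<noteq> 0"
    using assms(2) by (auto simp: kupka_points_def)
  have "dform A j k \<in> gen_ideal {dform A j k | j k. True}"
    by (rule subsetD[OF gen_ideal_superset]) blast
  then have "f * dform A j k \<in> J_ideal A"
    using assms(1) by (simp add: K_ideal_def ideal_quot_def)
  moreover have "x \<in> zero_set (J_ideal A)" using x(1) by (simp add: zero_set_J_ideal)
  ultimately have "meval (f * dform A j k) x = 0" unfolding zero_set_def by blast
  then show ?thesis using x(2) by simp
qed

lemma dform_nonzero_at_origin_imp_degree_2: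
  assumes "\<And>i. homogeneous (e - 1) (A i)" "e \<ge> 2" "meval (dform A j k) (\<lambda>_. 0) \<noteq> 0"
  shows "e = 2"
proof (rule ccontr)
  assume "e \<noteq> 2"
  then have "meval (dform A j k) (\<lambda>_. 0) = 0"
    using assms(2) by (intro homogeneous_meval_origin[OF homogeneous_dform[OF assms(1)]]) simp
  then show False using assms(3) by simp
qed

text \<open>At the vertex of the cone, \<open>\<omega>\<close> is linear and \<open>d\<omega>\<close> constant; a common zero \<open>y\<close> of the linear
  forms \<open>A\<^sub>j, A\<^sub>k\<close> is then a zero of every \<open>A\<^sub>i\<close>, because \<open>\<omega> \<and> d\<omega> = 0\<close> gives
  \<open>A\<^sub>i(y) d\<omega>\<^sub>j\<^sub>k = 0\<close>.\<close>

lemma kupka_points_line_through_origin: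
  fixes A :: "'n::finite \<Rightarrow> 'n mpoly"
  assumes card: "card (UNIV :: 'n set) \<ge> 3" and "e \<ge> 2" and foliation: "foliation e A"
    and nonzero: "meval (dform A j k) (\<lambda>_. 0) \<noteq> 0"
  obtains y :: "'n \<Rightarrow> complex" where "y \<noteq> (\<lambda>_. 0)" "\<And>t. t \<noteq> 0 \<Longrightarrow> (\<lambda>i. t * y i) \<in> kupka_points A"
proof -
  have homogeneous: "\<And>i. homogeneous (e - 1) (A i)" and wedge: "\<And>i. wedge_dform A i j k = 0"
    using foliation unfolding foliation_def by auto
  then have "e = 2" using dform_nonzero_at_origin_imp_degree_2 \<open>e \<ge> 2\<close> nonzero by blast
  then have linear: "homogeneous 1 (A i)" for i using homogeneous[of i] by simp
  have "homogeneous 0 (dform A j k)"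
    using homogeneous_dform[of "e - 1" A j k] homogeneous \<open>e = 2\<close> by simp
  then have dform_nonzero: "meval (dform A j k) z \<noteq> 0" for z
    using homogeneous_0_meval nonzero by metis
  obtain y where y: "y \<noteq> (\<lambda>_. 0)" "meval (A j) y = 0" "meval (A k) y = 0"
    using linear_forms_common_zero[OF card,
        of "\<lambda>l. Poly_Mapping.lookup (A j) (Poly_Mapping.single l 1)"
           "\<lambda>l. Poly_Mapping.lookup (A k) (Poly_Mapping.single l 1)"]
    unfolding homogeneous_1_meval[OF linear] by blast
  have "meval (A i) y * meval (dform A j k) y = 0" for i
    using arg_cong[OF wedge[of i], of "\<lambda>p. meval p y"] y(2,3) by (simp add: wedge_dform_def)
  then have sing: "meval (A i) y = 0" for i using dform_nonzero by simp
  have "(\<lambda>i. t * y i) \<in> kupka_points A" if "t \<noteq> 0" for t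
  proof -
    have "(\<lambda>i. t * y i) \<noteq> (\<lambda>_. 0)" using y(1) \<open>t \<noteq> 0\<close> by (metis mult_eq_0_iff)
    moreover have "(\<lambda>i. t * y i) \<in> sing_cone A"
      by (simp add: sing_cone_def zero_set_def homogeneous_meval_scale[OF linear] sing)
    ultimately show ?thesis using dform_nonzero by (auto simp: kupka_points_def)
  qed
  then show thesis using that y(1) by blast
qed

lemma vanishing_on_kupka_points_extends:
  fixes A :: "'n::finite \<Rightarrow> 'n mpoly"
  assumes "card (UNIV :: 'n set) \<ge> 3" "e \<ge> 2" "foliation e A"
    and f: "\<And>x. x \<in> kupka_points A \<Longrightarrow> meval f x = 0"
    and x: "x \<in> sing_cone A" "meval (dform A j k) x \<noteq> 0"
  shows "meval f x = 0"
proof (cases "x = (\<lambda>_. 0)")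
  case True
  then obtain y where "\<And>t. t \<noteq> 0 \<Longrightarrow> (\<lambda>i. t * y i) \<in> kupka_points A"
    using kupka_points_line_through_origin[OF assms(1-3)] x(2) by blast
  then have "meval f (\<lambda>i. 0 * y i) = 0"
    using continuous_vanishing_off_origin[OF continuous_on_meval_line] f by blast
  then show ?thesis using True by simp
qed (use x f in \<open>auto simp: kupka_points_def\<close>)

lemma dform_ideal_mult_vanishes_on_sing_cone:
  fixes A :: "'n::finite \<Rightarrow> 'n mpoly"
  assumes "card (UNIV :: 'n set) \<ge> 3" "e \<ge> 2" "foliation e A"
    and f: "\<And>x. x \<in> kupka_points A \<Longrightarrow> meval f x = 0"
    and g: "g \<in> gen_ideal {dform A j k | j k. True}" and x: "x \<in> sing_cone A"
  shows "meval (f * g) x = 0"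
proof (cases "\<exists>j k. meval (dform A j k) x \<noteq> 0")
  case True
  then show ?thesis using vanishing_on_kupka_points_extends[OF assms(1-3) f x] by auto
next
  case False
  then have "x \<in> zero_set (gen_ideal {dform A j k | j k. True})"
    unfolding zero_set_gen_ideal by (auto simp: zero_set_def)
  then show ?thesis using g by (simp add: zero_set_def)
qed

lemma ideal_quot_member_if_vanishing:
  assumes J: "is_ideal J" "radical J = J"
    and vanish: "\<And>g x. g \<in> L \<Longrightarrow> x \<in> zero_set J \<Longrightarrow> meval (f * g) x = 0"
  shows "f \<in> ideal_quot J L"
  unfolding ideal_quot_def
proof (intro CollectI ballI)
  fix g assume "g \<in> L"
  then obtain k where k: "(f * g) ^ k \<in> J"
    using nullstellensatz[OF J(1)] vanish by blast
  show "f * g \<in> J"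
  proof (cases k)
    case 0
    then show ?thesis using k ideal_mult_left[OF J(1), of 1 "f * g"] by simp
  next
    case (Suc k')
    then show ?thesis using k J(2) unfolding radical_def by blast
  qed
qed

theorem lemma4p6:
  fixes A :: "'n::finite \<Rightarrow> 'n mpoly" and e :: nat
  assumes "card (UNIV :: 'n set) \<ge> 3"
    and "e \<ge> 2"
    and "foliation e A"
    and "radical (J_ideal A) = J_ideal A"
  shows "K_ideal A = vanishing_ideal (kupka_cone A)"
proof
  show "K_ideal A \<subseteq> vanishing_ideal (kupka_cone A)"
    using K_ideal_vanishes_on_kupka_points by (auto simp: vanishing_ideal_kupka_cone)
  show "vanishing_ideal (kupka_cone A) \<subseteq> K_ideal A"
  proof
    fix f assume "f \<in> vanishing_ideal (kupka_cone A)"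
    then have f: "\<And>x. x \<in> kupka_points A \<Longrightarrow> meval f x = 0"
      by (simp add: vanishing_ideal_kupka_cone)
    show "f \<in> K_ideal A"
      unfolding K_ideal_def
    proof (rule ideal_quot_member_if_vanishing)
      show "meval (f * g) x = 0"
        if "g \<in> gen_ideal {dform A j k | j k. True}" "x \<in> zero_set (J_ideal A)" for g x
        using dform_ideal_mult_vanishes_on_sing_cone[OF assms(1-3) f] that
        by (simp add: zero_set_J_ideal)
    qed (use assms(4) in \<open>simp_all add: J_ideal_def is_ideal_gen_ideal\<close>)
  qed
qed

end
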